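(* Let $F\colon\mathbb{N}\to(0,\infty)$ be strictly monotone with $\sum_{k=1}^\infty 1/F(k)<\infty$. Let $\Xi(0)\in\mathbb{N}$, let $\tau(k)$, $k\ge\Xi(0)$, be independent with $\tau(k)$ exponential of rate $F(k)$, let $g_k$ denote the density of $T(k)=\sum_{l=\Xi(0)}^k\tau(l)$ and $g$ the density of $T=\sum_{l=\Xi(0)}^\infty\tau(l)$. Then for any $t_0>0$, $$\frac{g_k(t)}{g(t)}\to1\quad\text{as }k\to\infty,\ \text{uniformly in }t\ge t_0.$$
   Context: $\mathbb{N}=\{1,2,\dots\}$. $T$ is the explosion time of the pure birth process started at $\Xi(0)$ that jumps from $k$ to $k+1$ at rate $F(k)$; $T(k)$ is its first passage time past level $k$. *)

theory Defs
  imports "HOL-Probability.Probability"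
begin

end

(*
  Let c = F(Xi(0)), the smallest rate, and split off the first holding time:
  T(k) = tau(Xi(0)) + S_k and T = tau(Xi(0)) + S_k + R_k, where S_k sums the holding
  times after Xi(0) up to k and R_k is the tail after k.  As tau(Xi(0)) ~ Exp(c) is
  independent of the rest,

    g_k(t) = c e^(-ct) E[e^(c S_k); S_k <= t],
    g(t)   = c e^(-ct) E[e^(c (S_k + R_k)); S_k + R_k <= t].

  Independence of S_k and R_k >= 0 then squeezes g(t) e^(ct) / c between
  P(R_k <= delta) E[e^(c S_k); S_k <= t - delta] and E[e^(c R_k)] E[e^(c S_k); S_k <= t].
  Here E[e^(c R_k)] <= exp (c * sum_(l>k) 1/(F(l) - c)) -> 1 and, by Markov,
  P(R_k > delta) <= E[R_k] / delta -> 0.  The tilted distribution functions of S_k are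
  Lipschitz uniformly in k (the summand tau(Xi(0)+1) has a bounded density) and bounded
  below on [t0/2, oo) uniformly in k, so the shift by delta costs a factor 1 - O(delta)
  uniformly in t >= t0.  Continuity of the densities turns the almost-everywhere
  identities into pointwise ones.
*)

theory Submission
  imports Defs
begin

lemma (in prob_space) nn_integral_indicator_atMost:
  fixes X :: "'a \<Rightarrow> real"
  assumes [measurable]: "random_variable borel X"
  shows "(\<integral>\<^sup>+\<omega>. indicator {..b} (X \<omega>) \<partial>M) = ennreal (prob {\<omega> \<in> space M. X \<omega> \<le> b})"
proof -
  have "(\<integral>\<^sup>+\<omega>. indicator {..b} (X \<omega>) \<partial>M) = (\<integral>\<^sup>+\<omega>. indicator {\<omega> \<in> space M. X \<omega> \<le> b} \<omega> \<partial>M)"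
    by (intro nn_integral_cong) (auto split: split_indicator)
  also have "\<dots> = emeasure M {\<omega> \<in> space M. X \<omega> \<le> b}"
    by (rule nn_integral_indicator) measurable
  finally show ?thesis
    by (simp add: emeasure_eq_measure)
qed

lemma (in prob_space) nn_integral_indep_var_pair:
  fixes X Y :: "'a \<Rightarrow> real" and f :: "real \<times> real \<Rightarrow> ennreal"
  assumes indep: "indep_var borel X borel Y" and f[measurable]: "f \<in> borel_measurable (borel \<Otimes>\<^sub>M borel)"
  shows "(\<integral>\<^sup>+\<omega>. f (X \<omega>, Y \<omega>) \<partial>M) = (\<integral>\<^sup>+\<omega>. \<integral>\<^sup>+\<omega>'. f (X \<omega>', Y \<omega>) \<partial>M \<partial>M)"
proof -
  have [measurable]: "random_variable borel X" "random_variable borel Y"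
    using indep_var_rv1[OF indep] indep_var_rv2[OF indep] by auto
  interpret DX: prob_space "distr M borel X" by (rule prob_space_distr) simp
  interpret DY: prob_space "distr M borel Y" by (rule prob_space_distr) simp
  interpret pair_sigma_finite "distr M borel X" "distr M borel Y" ..
  have "(\<integral>\<^sup>+\<omega>. f (X \<omega>, Y \<omega>) \<partial>M) = (\<integral>\<^sup>+z. f z \<partial>distr M (borel \<Otimes>\<^sub>M borel) (\<lambda>\<omega>. (X \<omega>, Y \<omega>)))"
    by (subst nn_integral_distr) auto
  also have "\<dots> = (\<integral>\<^sup>+z. f z \<partial>(distr M borel X \<Otimes>\<^sub>M distr M borel Y))"
    using indep by (simp add: indep_var_distribution_eq)
  also have "\<dots> = (\<integral>\<^sup>+y. \<integral>\<^sup>+x. f (x, y) \<partial>distr M borel X \<partial>distr M borel Y)"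
    by (rule nn_integral_snd[symmetric]) simp
  also have "\<dots> = (\<integral>\<^sup>+\<omega>. \<integral>\<^sup>+\<omega>'. f (X \<omega>', Y \<omega>) \<partial>M \<partial>M)"
    by (subst nn_integral_distr) (auto intro!: DX.borel_measurable_nn_integral nn_integral_cong simp: nn_integral_distr)
  finally show ?thesis .
qed

lemma (in prob_space) nn_integral_indep_var_mult:
  fixes X Y :: "'a \<Rightarrow> real" and u v :: "real \<Rightarrow> ennreal"
  assumes indep: "indep_var borel X borel Y" and [measurable]: "u \<in> borel_measurable borel" "v \<in> borel_measurable borel"
  shows "(\<integral>\<^sup>+\<omega>. u (X \<omega>) * v (Y \<omega>) \<partial>M) = (\<integral>\<^sup>+\<omega>. u (X \<omega>) \<partial>M) * (\<integral>\<^sup>+\<omega>. v (Y \<omega>) \<partial>M)"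
proof -
  have [measurable]: "random_variable borel X" "random_variable borel Y"
    using indep_var_rv1[OF indep] indep_var_rv2[OF indep] by auto
  have "(\<integral>\<^sup>+\<omega>. u (X \<omega>) * v (Y \<omega>) \<partial>M) = (\<integral>\<^sup>+\<omega>. \<integral>\<^sup>+\<omega>'. u (X \<omega>') * v (Y \<omega>) \<partial>M \<partial>M)"
    using nn_integral_indep_var_pair[OF indep, of "\<lambda>z. u (fst z) * v (snd z)"] by simp
  also have "\<dots> = (\<integral>\<^sup>+\<omega>. (\<integral>\<^sup>+\<omega>'. u (X \<omega>') \<partial>M) * v (Y \<omega>) \<partial>M)"
    by (intro nn_integral_cong nn_integral_multc) auto
  also have "\<dots> = (\<integral>\<^sup>+\<omega>. u (X \<omega>) \<partial>M) * (\<integral>\<^sup>+\<omega>. v (Y \<omega>) \<partial>M)"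
    by (subst nn_integral_cmult) auto
  finally show ?thesis .
qed

text \<open>Unlike \<open>distributed_convolution\<close>, only the first summand needs a density.\<close>

lemma (in prob_space) distributed_add_indep_var:
  fixes X Y :: "'a \<Rightarrow> real" and p :: "real \<Rightarrow> ennreal"
  assumes indep: "indep_var borel X borel Y" and X: "distributed M lborel X p"
  shows "distributed M lborel (\<lambda>\<omega>. X \<omega> + Y \<omega>) (\<lambda>t. \<integral>\<^sup>+\<omega>. p (t - Y \<omega>) \<partial>M)"
proof -
  have [measurable]: "random_variable borel X" "random_variable borel Y"
    using indep_var_rv1[OF indep] indep_var_rv2[OF indep] by auto
  have [measurable]: "p \<in> borel_measurable borel"
    using distributed_borel_measurable[OF X] by simp
  interpret sigma_finite_measure M ..
  interpret pair_sigma_finite M lborel ..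
  have "distr M lborel (\<lambda>\<omega>. X \<omega> + Y \<omega>) = density lborel (\<lambda>t. \<integral>\<^sup>+\<omega>. p (t - Y \<omega>) \<partial>M)"
  proof (rule measure_eqI)
    fix A assume "A \<in> sets (distr M lborel (\<lambda>\<omega>. X \<omega> + Y \<omega>))"
    then have [measurable]: "A \<in> sets borel" by simp
    have "emeasure (distr M lborel (\<lambda>\<omega>. X \<omega> + Y \<omega>)) A = (\<integral>\<^sup>+\<omega>. indicator A (X \<omega> + Y \<omega>) \<partial>M)"
      by (subst emeasure_distr) (auto simp flip: nn_integral_indicator intro!: nn_integral_cong split: split_indicator)
    also have "\<dots> = (\<integral>\<^sup>+\<omega>. \<integral>\<^sup>+\<omega>'. indicator A (X \<omega>' + Y \<omega>) \<partial>M \<partial>M)"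
      using nn_integral_indep_var_pair[OF indep, of "\<lambda>z. indicator A (fst z + snd z)"] by simp
    also have "\<dots> = (\<integral>\<^sup>+\<omega>. \<integral>\<^sup>+x. p x * indicator A (x + Y \<omega>) \<partial>lborel \<partial>M)"
      by (intro nn_integral_cong distributed_nn_integral[OF X, symmetric]) auto
    also have "\<dots> = (\<integral>\<^sup>+\<omega>. \<integral>\<^sup>+t. p (t - Y \<omega>) * indicator A t \<partial>lborel \<partial>M)"
    proof (rule nn_integral_cong)
      fix \<omega>
      show "(\<integral>\<^sup>+x. p x * indicator A (x + Y \<omega>) \<partial>lborel) = (\<integral>\<^sup>+t. p (t - Y \<omega>) * indicator A t \<partial>lborel)"
        using nn_integral_real_affine[where c=1 and t="- Y \<omega>" and f="\<lambda>x. p x * indicator A (x + Y \<omega>)"]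
        by simp
    qed
    also have "\<dots> = (\<integral>\<^sup>+t. \<integral>\<^sup>+\<omega>. p (t - Y \<omega>) * indicator A t \<partial>M \<partial>lborel)"
      by (rule Fubini'[symmetric]) measurable
    also have "\<dots> = (\<integral>\<^sup>+t. (\<integral>\<^sup>+\<omega>. p (t - Y \<omega>) \<partial>M) * indicator A t \<partial>lborel)"
      by (intro nn_integral_cong nn_integral_multc) auto
    also have "\<dots> = emeasure (density lborel (\<lambda>t. \<integral>\<^sup>+\<omega>. p (t - Y \<omega>) \<partial>M)) A"
      by (subst emeasure_density) auto
    finally show "emeasure (distr M lborel (\<lambda>\<omega>. X \<omega> + Y \<omega>)) A = emeasure (density lborel (\<lambda>t. \<integral>\<^sup>+\<omega>. p (t - Y \<omega>) \<partial>M)) A" .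
  qed simp
  then show ?thesis unfolding distributed_def by simp
qed

lemma continuous_on_le_if_AE_le:
  fixes f h :: "real \<Rightarrow> real"
  assumes U: "open U" and "continuous_on U f" "continuous_on U h"
    and AE: "AE t in lborel. t \<in> U \<longrightarrow> f t \<le> h t"
  shows "\<forall>t\<in>U. f t \<le> h t"
proof (rule ccontr)
  assume "\<not> (\<forall>t\<in>U. f t \<le> h t)"
  then obtain t where t: "t \<in> U" "h t < f t" by auto
  define V where "V = (\<lambda>s. f s - h s) -` {0<..} \<inter> U"
  have "continuous_on U (\<lambda>s. f s - h s)"
    using assms by (intro continuous_intros)
  then have "open V"
    unfolding V_def by (rule continuous_on_open_vimage[OF U, THEN iffD1, rule_format, OF _ open_greaterThan])
  moreover have "t \<in> V"
    using t by (simp add: V_def)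
  ultimately obtain e where e: "0 < e" "ball t e \<subseteq> V"
    using open_contains_ball by blast
  obtain N where N: "\<And>s. s \<in> space lborel - N \<Longrightarrow> s \<in> U \<longrightarrow> f s \<le> h s" "N \<in> null_sets lborel"
    using AE_E3[OF AE] by blast
  have "ball t e \<subseteq> N"
  proof
    fix s assume "s \<in> ball t e"
    then have "s \<in> U" "h s < f s"
      using e(2) by (auto simp: V_def)
    then show "s \<in> N"
      using N(1)[of s] by force
  qed
  then have "ball t e \<in> null_sets lborel"
    by (intro null_sets_subset[OF N(2)]) auto
  moreover have "ball t e = {t - e <..< t + e}"
    by (auto simp: ball_def dist_real_def)
  ultimately show False
    using e by (simp add: null_sets_def)
qed

lemma uniform_limit_ratio_one:
  fixes G :: "'i \<Rightarrow> 'b \<Rightarrow> real" and g :: "'b \<Rightarrow> real"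
  assumes "\<And>e. 0 < e \<Longrightarrow> e < 1 \<Longrightarrow>
    \<forall>\<^sub>F k in F. \<forall>t\<in>S. 0 < G k t \<and> (1 - e) * G k t \<le> g t \<and> g t \<le> (1 + e) * G k t"
  shows "uniform_limit S (\<lambda>k t. G k t / g t) (\<lambda>t. 1) F"
  unfolding uniform_limit_iff
proof (intro allI impI)
  fix \<epsilon> :: real assume "0 < \<epsilon>"
  define e where "e = min (1/2) (\<epsilon> / 3)"
  have e: "0 < e" "2 * e \<le> 1" "2 * e < \<epsilon>"
    using \<open>0 < \<epsilon>\<close> by (auto simp: e_def)
  have "e < 1"
    using e by simp
  show "\<forall>\<^sub>F k in F. \<forall>t\<in>S. dist (G k t / g t) 1 < \<epsilon>"
    using assms[OF e(1) \<open>e < 1\<close>]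
  proof (rule eventually_mono, intro ballI)
    fix k t
    assume "\<forall>t\<in>S. 0 < G k t \<and> (1 - e) * G k t \<le> g t \<and> g t \<le> (1 + e) * G k t" and "t \<in> S"
    then have G: "0 < G k t" and lo: "(1 - e) * G k t \<le> g t" and up: "g t \<le> (1 + e) * G k t"
      by auto
    have g: "0 < g t"
      using G e by (intro less_le_trans[OF _ lo]) simp
    have "1 \<le> (1 + 2 * e) * (1 - e)"
      using mult_left_mono[OF e(2), of e] e(1) by (simp add: algebra_simps)
    then have "G k t \<le> (1 + 2 * e) * ((1 - e) * G k t)"
      using G by (simp add: mult.assoc[symmetric])
    also have "\<dots> \<le> (1 + 2 * e) * g t"
      using lo e by (intro mult_left_mono) auto
    finally have "G k t / g t \<le> 1 + 2 * e"
      using g by (simp add: pos_divide_le_eq)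
    moreover have "(1 - e) * g t \<le> (1 - e) * ((1 + e) * G k t)"
      using up e by (intro mult_left_mono) auto
    moreover have "(1 - e) * ((1 + e) * G k t) \<le> G k t"
      using G e(1) by (simp add: algebra_simps zero_le_mult_iff)
    ultimately have "1 - e \<le> G k t / g t" "G k t / g t \<le> 1 + 2 * e"
      using g by (auto simp: pos_le_divide_eq mult.commute)
    then show "dist (G k t / g t) 1 < \<epsilon>"
      using e by (simp add: dist_real_def abs_le_iff)
  qed
qed

lemma tendsto_suminf_tail_zero:
  fixes f :: "nat \<Rightarrow> 'a::real_normed_vector"
  assumes "summable f"
  shows "(\<lambda>n. \<Sum>i. f (i + n)) \<longlonglongrightarrow> 0"
proof -
  have "(\<lambda>n. suminf f - (\<Sum>i<n. f i)) \<longlonglongrightarrow> suminf f - suminf f"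
    using assms by (intro tendsto_diff tendsto_const summable_LIMSEQ)
  then show ?thesis
    using assms by (simp add: suminf_minus_initial_segment)
qed

lemma not_summable_inverse_bounded:
  fixes f :: "nat \<Rightarrow> real"
  assumes pos: "\<And>k. 0 < f k" and bounded: "\<And>k. f k \<le> B"
  shows "\<not> summable (\<lambda>k. 1 / f k)"
proof
  assume "summable (\<lambda>k. 1 / f k)"
  then have "(\<lambda>k. 1 / f k) \<longlonglongrightarrow> 0"
    by (rule summable_LIMSEQ_zero)
  moreover have B: "0 < B"
    using pos[of 0] bounded[of 0] by simp
  ultimately obtain k where "1 / f k < 1 / B"
    by (metis eventually_sequentially order_tendstoD(2) order_refl zero_less_divide_1_iff)
  moreover have "1 / B \<le> 1 / f k"
    using pos[of k] bounded[of k] B by (intro divide_left_mono) auto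
  ultimately show False by simp
qed

definition tilted_cdf :: "'a measure \<Rightarrow> real \<Rightarrow> ('a \<Rightarrow> real) \<Rightarrow> real \<Rightarrow> ennreal" where
  "tilted_cdf M c Y t = (\<integral>\<^sup>+\<omega>. ennreal (exp (c * Y \<omega>)) * indicator {..t} (Y \<omega>) \<partial>M)"

lemma tilted_cdf_mono: "s \<le> t \<Longrightarrow> tilted_cdf M c Y s \<le> tilted_cdf M c Y t"
  unfolding tilted_cdf_def by (intro nn_integral_mono) (auto split: split_indicator)

lemma tilted_cdf_le_nn_integral_exp: "tilted_cdf M c Y t \<le> (\<integral>\<^sup>+\<omega>. ennreal (exp (c * Y \<omega>)) \<partial>M)"
  unfolding tilted_cdf_def by (intro nn_integral_mono) (auto split: split_indicator)

lemma (in prob_space) distributed_exponential_add: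
  fixes X Y :: "'a \<Rightarrow> real"
  assumes indep: "indep_var borel X borel Y"
    and X: "distributed M lborel X (\<lambda>x. ennreal (exponential_density c x))" and c: "0 < c"
  shows "distributed M lborel (\<lambda>\<omega>. X \<omega> + Y \<omega>) (\<lambda>t. ennreal (c * exp (- c * t)) * tilted_cdf M c Y t)"
proof -
  have [measurable]: "random_variable borel Y"
    using indep_var_rv2[OF indep] .
  have density: "ennreal (exponential_density c (t - y)) = ennreal (c * exp (- c * t)) * (ennreal (exp (c * y)) * indicator {..t} y)"
    for t y :: real
    using c by (cases "y \<le> t") (auto simp: exponential_density_def exp_add[symmetric] algebra_simps simp flip: ennreal_mult)
  have "(\<integral>\<^sup>+\<omega>. ennreal (exponential_density c (t - Y \<omega>)) \<partial>M) = ennreal (c * exp (- c * t)) * tilted_cdf M c Y t"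
    for t
    unfolding density tilted_cdf_def by (rule nn_integral_cmult) measurable
  with distributed_add_indep_var[OF indep X] show ?thesis
    by simp
qed

lemma (in prob_space) tilted_cdf_add_le:
  fixes Y Z :: "'a \<Rightarrow> real"
  assumes indep: "indep_var borel Y borel Z" and Z: "AE \<omega> in M. 0 \<le> Z \<omega>"
  shows "tilted_cdf M c (\<lambda>\<omega>. Y \<omega> + Z \<omega>) t \<le> tilted_cdf M c Y t * (\<integral>\<^sup>+\<omega>. ennreal (exp (c * Z \<omega>)) \<partial>M)"
proof -
  have "tilted_cdf M c (\<lambda>\<omega>. Y \<omega> + Z \<omega>) t
      \<le> (\<integral>\<^sup>+\<omega>. (ennreal (exp (c * Y \<omega>)) * indicator {..t} (Y \<omega>)) * ennreal (exp (c * Z \<omega>)) \<partial>M)"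
    unfolding tilted_cdf_def using Z
    by (intro nn_integral_mono_AE, eventually_elim)
       (auto simp: exp_add[symmetric] algebra_simps simp flip: ennreal_mult split: split_indicator)
  also have "\<dots> = tilted_cdf M c Y t * (\<integral>\<^sup>+\<omega>. ennreal (exp (c * Z \<omega>)) \<partial>M)"
    unfolding tilted_cdf_def
    by (rule nn_integral_indep_var_mult[OF indep, where u="\<lambda>y. ennreal (exp (c * y)) * indicator {..t} y"]) auto
  finally show ?thesis .
qed

lemma (in prob_space) tilted_cdf_add_ge:
  fixes Y Z :: "'a \<Rightarrow> real"
  assumes indep: "indep_var borel Y borel Z" and Z: "AE \<omega> in M. 0 \<le> Z \<omega>" and c: "0 \<le> c"
  shows "tilted_cdf M c Y (t - \<delta>) * ennreal (prob {\<omega> \<in> space M. Z \<omega> \<le> \<delta>}) \<le> tilted_cdf M c (\<lambda>\<omega>. Y \<omega> + Z \<omega>) t"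
proof -
  have [measurable]: "random_variable borel Z"
    using indep_var_rv2[OF indep] .
  have "tilted_cdf M c Y (t - \<delta>) * ennreal (prob {\<omega> \<in> space M. Z \<omega> \<le> \<delta>})
      = (\<integral>\<^sup>+\<omega>. (ennreal (exp (c * Y \<omega>)) * indicator {..t - \<delta>} (Y \<omega>)) * indicator {..\<delta>} (Z \<omega>) \<partial>M)"
    unfolding tilted_cdf_def nn_integral_indicator_atMost[symmetric, OF \<open>random_variable borel Z\<close>]
    by (rule nn_integral_indep_var_mult[OF indep, symmetric]) auto
  also have "\<dots> \<le> tilted_cdf M c (\<lambda>\<omega>. Y \<omega> + Z \<omega>) t"
    unfolding tilted_cdf_def using Z
  proof (intro nn_integral_mono_AE, eventually_elim)
    case (elim \<omega>)
    have "exp (c * Y \<omega>) \<le> exp (c * (Y \<omega> + Z \<omega>))"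
      using elim c by (simp add: mult_left_mono)
    then show ?case
      by (auto intro: ennreal_leI split: split_indicator)
  qed
  finally show ?thesis .
qed

lemma (in prob_space) tilted_cdf_exponential_add_lipschitz:
  fixes X Y :: "'a \<Rightarrow> real"
  assumes indep: "indep_var borel X borel Y"
    and X: "distributed M lborel X (\<lambda>x. ennreal (exponential_density r x))"
    and c: "0 \<le> c" "c \<le> r" and st: "s \<le> t"
  shows "tilted_cdf M c (\<lambda>\<omega>. X \<omega> + Y \<omega>) t
    \<le> tilted_cdf M c (\<lambda>\<omega>. X \<omega> + Y \<omega>) s + ennreal (r * (t - s)) * (\<integral>\<^sup>+\<omega>. ennreal (exp (c * Y \<omega>)) \<partial>M)"
proof -
  have [measurable]: "random_variable borel X" "random_variable borel Y"
    using indep_var_rv1[OF indep] indep_var_rv2[OF indep] by auto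
  define h where "h z = ennreal (exp (c * (fst z + snd z))) * indicator {s<..t} (fst z + snd z)" for z :: "real \<times> real"
  have [measurable]: "h \<in> borel_measurable (borel \<Otimes>\<^sub>M borel)"
    unfolding h_def by measurable
  have tilted_bound: "exponential_density r x * exp (c * (x + y)) \<le> r * exp (c * y)" for x y
  proof (cases "x < 0")
    case False
    have "exponential_density r x * exp (c * (x + y)) = r * exp (c * y) * exp (- ((r - c) * x))"
      using False by (simp add: exponential_density_def exp_add[symmetric] algebra_simps)
    also have "\<dots> \<le> r * exp (c * y)"
      using False c by (intro mult_left_le) auto
    finally show ?thesis .
  qed (use c in \<open>simp add: exponential_density_def\<close>)
  have "tilted_cdf M c (\<lambda>\<omega>. X \<omega> + Y \<omega>) t = tilted_cdf M c (\<lambda>\<omega>. X \<omega> + Y \<omega>) s + (\<integral>\<^sup>+\<omega>. h (X \<omega>, Y \<omega>) \<partial>M)"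
    unfolding tilted_cdf_def h_def using st
    by (subst nn_integral_add[symmetric]) (auto intro!: nn_integral_cong split: split_indicator)
  also have "(\<integral>\<^sup>+\<omega>. h (X \<omega>, Y \<omega>) \<partial>M) = (\<integral>\<^sup>+\<omega>. \<integral>\<^sup>+x. ennreal (exponential_density r x) * h (x, Y \<omega>) \<partial>lborel \<partial>M)"
    by (simp add: nn_integral_indep_var_pair[OF indep] distributed_nn_integral[OF X])
  also have "\<dots> \<le> (\<integral>\<^sup>+\<omega>. \<integral>\<^sup>+x. ennreal (r * exp (c * Y \<omega>)) * indicator {s - Y \<omega><..t - Y \<omega>} x \<partial>lborel \<partial>M)"
    using tilted_bound
    by (intro nn_integral_mono)
       (auto simp: h_def simp flip: ennreal_mult'' intro!: ennreal_leI split: split_indicator)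
  also have "\<dots> = (\<integral>\<^sup>+\<omega>. ennreal (r * (t - s)) * ennreal (exp (c * Y \<omega>)) \<partial>M)"
    using st c
    by (intro nn_integral_cong)
       (simp add: nn_integral_cmult_indicator emeasure_lborel_Ioc mult.commute mult.left_commute flip: ennreal_mult'')
  also have "\<dots> = ennreal (r * (t - s)) * (\<integral>\<^sup>+\<omega>. ennreal (exp (c * Y \<omega>)) \<partial>M)"
    by (rule nn_integral_cmult) measurable
  finally show ?thesis
    by (simp add: add_left_mono)
qed

locale explosive_birth_times = prob_space M for M :: "'a measure" +
  fixes F :: "nat \<Rightarrow> real" and x0 :: nat and \<tau> :: "nat \<Rightarrow> 'a \<Rightarrow> real"
  assumes first_rate_pos: "0 < F x0"
    and first_rate_least: "\<And>l. x0 < l \<Longrightarrow> F x0 < F l"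
    and summable_inverse_rate: "summable (\<lambda>l. 1 / F (x0 + l))"
    and indep_tau: "indep_vars (\<lambda>_. borel) \<tau> {x0..}"
    and distributed_tau: "\<And>l. x0 \<le> l \<Longrightarrow> distributed M lborel (\<tau> l) (\<lambda>x. ennreal (exponential_density (F l) x))"
begin

lemma rate_pos: "x0 \<le> l \<Longrightarrow> 0 < F l"
  using first_rate_pos first_rate_least[of l] by (cases "l = x0") auto

lemma random_variable_tau[measurable]: "x0 \<le> l \<Longrightarrow> random_variable borel (\<tau> l)"
  using distributed_measurable[OF distributed_tau] by (simp add: measurable_lborel1)

lemma AE_tau_nonneg: "AE \<omega> in M. \<forall>l\<ge>x0. 0 \<le> \<tau> l \<omega>"
proof -
  have "AE \<omega> in M. 0 \<le> \<tau> l \<omega>" if "x0 \<le> l" for l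
  proof -
    have "(AE \<omega> in M. 0 \<le> \<tau> l \<omega>) \<longleftrightarrow> (AE x in lborel. 0 < ennreal (exponential_density (F l) x) \<longrightarrow> 0 \<le> x)"
      by (rule distributed_AE2[OF distributed_tau[OF that]]) measurable
    moreover have "AE x in lborel. 0 < ennreal (exponential_density (F l) x) \<longrightarrow> 0 \<le> x"
      by (auto simp: exponential_density_def)
    ultimately show ?thesis by simp
  qed
  then show ?thesis
    by (subst AE_all_countable) auto
qed

lemma nn_integral_tau: "x0 \<le> l \<Longrightarrow> (\<integral>\<^sup>+\<omega>. ennreal (\<tau> l \<omega>) \<partial>M) = ennreal (1 / F l)"
proof -
  assume l: "x0 \<le> l"
  have "(\<integral>\<^sup>+\<omega>. ennreal (\<tau> l \<omega>) \<partial>M) = (\<integral>\<^sup>+x. ennreal (exponential_density (F l) x) * ennreal x \<partial>lborel)"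
    by (rule distributed_nn_integral[OF distributed_tau[OF l], symmetric]) measurable
  also have "\<dots> = (\<integral>\<^sup>+x. ennreal (erlang_density 0 (F l) x * x ^ 1) \<partial>lborel)"
    using rate_pos[OF l]
    by (intro nn_integral_cong) (auto simp: exponential_density_def simp flip: ennreal_mult)
  also have "\<dots> = ennreal (1 / F l)"
    using rate_pos[OF l] by (subst nn_integral_erlang_ith_moment) auto
  finally show ?thesis .
qed

lemma nn_integral_exp_tau:
  assumes l: "x0 < l"
  shows "(\<integral>\<^sup>+\<omega>. ennreal (exp (F x0 * \<tau> l \<omega>)) \<partial>M) = ennreal (F l / (F l - F x0))"
proof -
  have gap: "0 < F l - F x0"
    using first_rate_least[OF l] by simp
  have "(\<integral>\<^sup>+\<omega>. ennreal (exp (F x0 * \<tau> l \<omega>)) \<partial>M) = (\<integral>\<^sup>+x. ennreal (exponential_density (F l) x) * ennreal (exp (F x0 * x)) \<partial>lborel)"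
    using l by (intro distributed_nn_integral[OF distributed_tau, symmetric]) auto
  also have "\<dots> = (\<integral>\<^sup>+x. ennreal (F l / (F l - F x0)) * ennreal (erlang_density 0 (F l - F x0) x * x ^ 0) \<partial>lborel)"
  proof (intro nn_integral_cong)
    fix x :: real
    have "exponential_density (F l) x * exp (F x0 * x) = F l / (F l - F x0) * (erlang_density 0 (F l - F x0) x * x ^ 0)"
      using gap by (simp add: exponential_density_def exp_diff exp_minus field_simps)
    then show "ennreal (exponential_density (F l) x) * ennreal (exp (F x0 * x))
        = ennreal (F l / (F l - F x0)) * ennreal (erlang_density 0 (F l - F x0) x * x ^ 0)"
      using gap by (simp add: exponential_density_nonneg[OF gap] flip: ennreal_mult'' ennreal_mult)
  qed
  also have "\<dots> = ennreal (F l / (F l - F x0)) * (\<integral>\<^sup>+x. ennreal (erlang_density 0 (F l - F x0) x * x ^ 0) \<partial>lborel)"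
    by (rule nn_integral_cmult) measurable
  also have "\<dots> = ennreal (F l / (F l - F x0))"
    using gap by (subst nn_integral_erlang_ith_moment) auto
  finally show ?thesis .
qed

lemma summable_inverse_rate_from: "x0 \<le> j \<Longrightarrow> summable (\<lambda>l. 1 / F (j + l))"
proof -
  assume "x0 \<le> j"
  then have "(\<lambda>l. 1 / F (j + l)) = (\<lambda>l. 1 / F (x0 + (l + (j - x0))))"
    by (simp add: fun_eq_iff add.commute)
  then show ?thesis
    using summable_ignore_initial_segment[OF summable_inverse_rate, of "j - x0"] by simp
qed

lemma summable_inverse_gap: "x0 < j \<Longrightarrow> summable (\<lambda>l. 1 / (F (j + l) - F x0))"
proof -
  assume j: "x0 < j"
  have summable: "summable (\<lambda>l. 1 / F (j + l))"
    using j by (intro summable_inverse_rate_from) simp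
  then have "\<forall>\<^sub>F l in sequentially. 1 / F (j + l) < 1 / (2 * F x0)"
    using order_tendstoD(2)[OF summable_LIMSEQ_zero, of _ "1 / (2 * F x0)"] first_rate_pos by simp
  then have "\<forall>\<^sub>F l in sequentially. norm (1 / (F (j + l) - F x0)) \<le> 2 * (1 / F (j + l))"
  proof eventually_elim
    case (elim l)
    have "0 < F (j + l)" "F x0 < F (j + l)"
      using rate_pos first_rate_least j by auto
    moreover from elim this first_rate_pos have "2 * F x0 < F (j + l)"
      by (simp add: field_simps)
    ultimately show ?case
      by (simp add: field_simps)
  qed
  then show ?thesis
    using summable_mult[OF summable, of 2] by (rule summable_comparison_test_ev)
qed

definition inverse_rate_tail :: "nat \<Rightarrow> real" where
  "inverse_rate_tail j = (\<Sum>l. 1 / F (j + l))"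

definition inverse_gap_tail :: "nat \<Rightarrow> real" where
  "inverse_gap_tail j = (\<Sum>l. 1 / (F (j + l) - F x0))"

lemma inverse_rate_tail_tendsto_zero: "inverse_rate_tail \<longlonglongrightarrow> 0"
proof (rule LIMSEQ_offset[where k = x0])
  show "(\<lambda>n. inverse_rate_tail (n + x0)) \<longlonglongrightarrow> 0"
    using tendsto_suminf_tail_zero[OF summable_inverse_rate]
    by (simp add: inverse_rate_tail_def ac_simps)
qed

lemma inverse_gap_tail_tendsto_zero: "inverse_gap_tail \<longlonglongrightarrow> 0"
proof (rule LIMSEQ_offset[where k = "Suc x0"])
  show "(\<lambda>n. inverse_gap_tail (n + Suc x0)) \<longlonglongrightarrow> 0"
    using tendsto_suminf_tail_zero[OF summable_inverse_gap[of "Suc x0"]]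
    by (simp add: inverse_gap_tail_def ac_simps)
qed

lemma sum_inverse_gap_le_tail:
  assumes j: "x0 < j" and J: "finite J" "J \<subseteq> {j..}"
  shows "(\<Sum>l\<in>J. 1 / (F l - F x0)) \<le> inverse_gap_tail j"
proof -
  obtain m where m: "J \<subseteq> {j..<j + m}"
  proof -
    obtain b where "J \<subseteq> {..<b}"
      using finite_nat_bounded[OF J(1)] by blast
    then show ?thesis
      using J(2) by (intro that[of "b - j"]) force
  qed
  have nonneg: "0 \<le> 1 / (F l - F x0)" if "j \<le> l" for l
    using first_rate_least[of l] j that by simp
  have "(\<Sum>l\<in>J. 1 / (F l - F x0)) \<le> (\<Sum>l\<in>{j..<j + m}. 1 / (F l - F x0))"
    using m J nonneg by (intro sum_mono2) auto
  also have "\<dots> = (\<Sum>l<m. 1 / (F (j + l) - F x0))"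
    by (subst sum.atLeastLessThan_shift_0) (simp add: lessThan_atLeast0 add.commute)
  also have "\<dots> \<le> inverse_gap_tail j"
    unfolding inverse_gap_tail_def using summable_inverse_gap[OF j] nonneg
    by (intro sum_le_suminf) auto
  finally show ?thesis .
qed

lemma nn_integral_prod_tau:
  fixes u :: "nat \<Rightarrow> real \<Rightarrow> ennreal"
  assumes J: "finite J" "J \<subseteq> {x0..}" and [measurable]: "\<And>l. u l \<in> borel_measurable borel"
  shows "(\<integral>\<^sup>+\<omega>. (\<Prod>l\<in>J. u l (\<tau> l \<omega>)) \<partial>M) = (\<Prod>l\<in>J. \<integral>\<^sup>+\<omega>. u l (\<tau> l \<omega>) \<partial>M)"
proof -
  have "indep_vars (\<lambda>_. borel) (\<lambda>l \<omega>. u l (\<tau> l \<omega>)) J"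
    by (rule indep_vars_compose2[OF indep_vars_subset[OF indep_tau J(2)]]) auto
  from indep_vars_nn_integral[OF J(1) this] show ?thesis
    by simp
qed

text \<open>The bound \<open>F l / (F l - F x0) \<le> exp (F x0 / (F l - F x0))\<close> turns the product of the
  moment generating functions into the exponential of a tail of a convergent series.\<close>

lemma nn_integral_exp_sum_tau_le:
  assumes j: "x0 < j" and J: "finite J" "J \<subseteq> {j..}"
  shows "(\<integral>\<^sup>+\<omega>. ennreal (exp (F x0 * (\<Sum>l\<in>J. \<tau> l \<omega>))) \<partial>M) \<le> ennreal (exp (F x0 * inverse_gap_tail j))"
proof -
  have "(\<integral>\<^sup>+\<omega>. ennreal (exp (F x0 * (\<Sum>l\<in>J. \<tau> l \<omega>))) \<partial>M) = (\<integral>\<^sup>+\<omega>. (\<Prod>l\<in>J. ennreal (exp (F x0 * \<tau> l \<omega>))) \<partial>M)"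
    using J(1) by (intro nn_integral_cong) (simp add: sum_distrib_left exp_sum prod_ennreal)
  also have "\<dots> = (\<Prod>l\<in>J. ennreal (F l / (F l - F x0)))"
    using J j by (subst nn_integral_prod_tau) (auto intro!: prod.cong nn_integral_exp_tau)
  also have "\<dots> = ennreal (\<Prod>l\<in>J. F l / (F l - F x0))"
  proof (rule prod_ennreal)
    fix l assume "l \<in> J"
    then have "F x0 < F l"
      using J j first_rate_least by auto
    then show "0 \<le> F l / (F l - F x0)"
      using first_rate_pos by simp
  qed
  also have "\<dots> \<le> ennreal (\<Prod>l\<in>J. exp (F x0 * (1 / (F l - F x0))))"
  proof (intro ennreal_leI prod_mono conjI)
    fix l assume "l \<in> J"
    then have gap: "0 < F l - F x0"
      using first_rate_least J j by auto
    have "F l / (F l - F x0) = 1 + F x0 * (1 / (F l - F x0))"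
      using gap by (simp add: field_simps)
    also have "\<dots> \<le> exp (F x0 * (1 / (F l - F x0)))"
      by (rule exp_ge_add_one_self)
    finally show "F l / (F l - F x0) \<le> exp (F x0 * (1 / (F l - F x0)))" .
    show "0 \<le> F l / (F l - F x0)"
      using gap first_rate_pos by (simp add: less_imp_le)
  qed
  also have "\<dots> = ennreal (exp (F x0 * (\<Sum>l\<in>J. 1 / (F l - F x0))))"
    using J(1) by (simp add: sum_distrib_left exp_sum)
  also have "\<dots> \<le> ennreal (exp (F x0 * inverse_gap_tail j))"
    using sum_inverse_gap_le_tail[OF j J] first_rate_pos by (intro ennreal_leI) simp
  finally show ?thesis .
qed

lemma nn_integral_suminf_tau:
  assumes j: "x0 \<le> j"
  shows "(\<integral>\<^sup>+\<omega>. (\<Sum>l. ennreal (\<tau> (j + l) \<omega>)) \<partial>M) = ennreal (inverse_rate_tail j)"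
proof -
  have "(\<integral>\<^sup>+\<omega>. (\<Sum>l. ennreal (\<tau> (j + l) \<omega>)) \<partial>M) = (\<Sum>l. \<integral>\<^sup>+\<omega>. ennreal (\<tau> (j + l) \<omega>) \<partial>M)"
    using j by (intro nn_integral_suminf) auto
  also have "\<dots> = (\<Sum>l. ennreal (1 / F (j + l)))"
    using j by (intro suminf_cong nn_integral_tau) auto
  also have "\<dots> = ennreal (inverse_rate_tail j)"
    unfolding inverse_rate_tail_def using j rate_pos
    by (intro suminf_ennreal2 summable_inverse_rate_from) (auto simp: less_imp_le)
  finally show ?thesis .
qed

lemma AE_summable_tau:
  assumes j: "x0 \<le> j"
  shows "AE \<omega> in M. summable (\<lambda>l. \<tau> (j + l) \<omega>)"
proof -
  have "AE \<omega> in M. (\<Sum>l. ennreal (\<tau> (j + l) \<omega>)) \<noteq> \<infinity>"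
    using j by (intro nn_integral_PInf_AE) (auto simp: nn_integral_suminf_tau)
  with AE_tau_nonneg show ?thesis
    by eventually_elim (use j in \<open>auto intro: summable_suminf_not_top\<close>)
qed

lemma nn_integral_tau_tail:
  assumes j: "x0 \<le> j"
  shows "(\<integral>\<^sup>+\<omega>. ennreal (\<Sum>l. \<tau> (j + l) \<omega>) \<partial>M) = ennreal (inverse_rate_tail j)"
proof -
  have "AE \<omega> in M. ennreal (\<Sum>l. \<tau> (j + l) \<omega>) = (\<Sum>l. ennreal (\<tau> (j + l) \<omega>))"
    using AE_summable_tau[OF j] AE_tau_nonneg
  proof eventually_elim
    case (elim \<omega>)
    then show ?case
      using j by (intro suminf_ennreal2[symmetric]) auto
  qed
  then show ?thesis
    by (simp add: nn_integral_cong_AE nn_integral_suminf_tau[OF j])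
qed

definition S :: "nat \<Rightarrow> 'a \<Rightarrow> real" where
  "S k \<omega> = (\<Sum>l\<in>{Suc x0..k}. \<tau> l \<omega>)"

text \<open>On the null set where the series diverges, \<open>R k \<omega>\<close> is a junk value.\<close>

definition R :: "nat \<Rightarrow> 'a \<Rightarrow> real" where
  "R k \<omega> = (\<Sum>l. \<tau> (Suc k + l) \<omega>)"

abbreviation Phi :: "nat \<Rightarrow> real \<Rightarrow> ennreal" where
  "Phi k \<equiv> tilted_cdf M (F x0) (S k)"

lemma random_variable_S[measurable]: "random_variable borel (S k)"
  unfolding S_def by measurable

lemma random_variable_R[measurable]: "x0 \<le> k \<Longrightarrow> random_variable borel (R k)"
  unfolding R_def by (intro borel_measurable_suminf) auto

lemma AE_S_nonneg: "AE \<omega> in M. 0 \<le> S k \<omega>"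
  using AE_tau_nonneg by eventually_elim (auto simp: S_def intro!: sum_nonneg)

lemma AE_R_nonneg:
  assumes "x0 \<le> k"
  shows "AE \<omega> in M. 0 \<le> R k \<omega>"
  using AE_summable_tau[OF le_SucI[OF assms]] AE_tau_nonneg
proof eventually_elim
  case (elim \<omega>)
  then show ?case
    using assms unfolding R_def by (intro suminf_nonneg) auto
qed

lemma AE_suminf_tau_eq:
  assumes k: "x0 \<le> k"
  shows "AE \<omega> in M. (\<Sum>l. \<tau> (x0 + l) \<omega>) = \<tau> x0 \<omega> + (S k \<omega> + R k \<omega>)"
  using AE_summable_tau[OF order_refl]
proof eventually_elim
  case (elim \<omega>)
  have "(\<Sum>l. \<tau> (x0 + l) \<omega>) = (\<Sum>l. \<tau> (x0 + (l + (Suc k - x0))) \<omega>) + (\<Sum>l<Suc k - x0. \<tau> (x0 + l) \<omega>)"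
    by (rule suminf_split_initial_segment[OF elim])
  also have "(\<Sum>l. \<tau> (x0 + (l + (Suc k - x0))) \<omega>) = R k \<omega>"
    using k by (simp add: R_def ac_simps Suc_diff_le)
  also have "(\<Sum>l<Suc k - x0. \<tau> (x0 + l) \<omega>) = (\<Sum>l\<in>{x0..k}. \<tau> l \<omega>)"
    using k by (subst sum.atLeastAtMost_shift_0)
      (auto simp: lessThan_atLeast0 atLeastLessThanSuc_atLeastAtMost add.commute Suc_diff_le)
  also have "\<dots> = \<tau> x0 \<omega> + S k \<omega>"
    using k by (simp add: S_def sum.atLeast_Suc_atMost)
  finally show ?case
    by simp
qed

lemma AE_S_le_S_add_R:
  assumes "x0 \<le> m" "m \<le> k"
  shows "AE \<omega> in M. S k \<omega> \<le> S m \<omega> + R m \<omega>"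
  using AE_summable_tau[OF le_SucI[OF assms(1)]] AE_tau_nonneg
proof eventually_elim
  case (elim \<omega>)
  have "{Suc x0..k} = {Suc x0..m} \<union> {Suc m..k}"
    using assms by auto
  then have "S k \<omega> = S m \<omega> + (\<Sum>l\<in>{Suc m..<Suc k}. \<tau> l \<omega>)"
    unfolding S_def by (simp add: sum.union_disjoint ivl_disj_int atLeastLessThanSuc_atLeastAtMost)
  also have "(\<Sum>l\<in>{Suc m..<Suc k}. \<tau> l \<omega>) = (\<Sum>l<k - m. \<tau> (Suc m + l) \<omega>)"
    by (subst sum.atLeastLessThan_shift_0) (simp add: lessThan_atLeast0)
  also have "\<dots> \<le> R m \<omega>"
    unfolding R_def using elim assms by (intro sum_le_suminf) auto
  finally show ?case
    by simp
qed

lemma indep_var_tau_blocks: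
  assumes "A \<inter> B = {}" "A \<subseteq> {x0..}" "B \<subseteq> {x0..}"
    and "f \<in> borel_measurable (PiM A (\<lambda>_. borel))" "h \<in> borel_measurable (PiM B (\<lambda>_. borel))"
  shows "indep_var borel (\<lambda>\<omega>. f (restrict (\<lambda>i. \<tau> i \<omega>) A)) borel (\<lambda>\<omega>. h (restrict (\<lambda>i. \<tau> i \<omega>) B))"
  using indep_var_compose[OF indep_var_restrict[OF indep_tau assms(1-3)] assms(4,5)] by (simp add: o_def)

lemma indep_var_S_R:
  assumes k: "x0 \<le> k"
  shows "indep_var borel (S k) borel (R k)"
proof -
  have "indep_var
      borel (\<lambda>\<omega>. (\<lambda>x. \<Sum>l\<in>{Suc x0..k}. x l) (restrict (\<lambda>i. \<tau> i \<omega>) {Suc x0..k}))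
      borel (\<lambda>\<omega>. (\<lambda>x. \<Sum>l. x (Suc k + l)) (restrict (\<lambda>i. \<tau> i \<omega>) {Suc k..}))"
    using k by (intro indep_var_tau_blocks borel_measurable_sum borel_measurable_suminf measurable_component_singleton) auto
  moreover have "(\<lambda>\<omega>. (\<lambda>x. \<Sum>l\<in>{Suc x0..k}. x l) (restrict (\<lambda>i. \<tau> i \<omega>) {Suc x0..k})) = S k"
    by (auto simp: S_def fun_eq_iff)
  moreover have "(\<lambda>\<omega>. (\<lambda>x. \<Sum>l. x (Suc k + l)) (restrict (\<lambda>i. \<tau> i \<omega>) {Suc k..})) = R k"
    by (auto simp: R_def fun_eq_iff)
  ultimately show ?thesis
    by simp
qed

lemma indep_var_tau_S_add_R:
  assumes k: "x0 \<le> k"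
  shows "indep_var borel (\<tau> x0) borel (\<lambda>\<omega>. S k \<omega> + R k \<omega>)"
proof -
  have "indep_var
      borel (\<lambda>\<omega>. (\<lambda>x. x x0) (restrict (\<lambda>i. \<tau> i \<omega>) {x0}))
      borel (\<lambda>\<omega>. (\<lambda>x. (\<Sum>l\<in>{Suc x0..k}. x l) + (\<Sum>l. x (Suc k + l))) (restrict (\<lambda>i. \<tau> i \<omega>) {Suc x0..}))"
    using k by (intro indep_var_tau_blocks borel_measurable_add borel_measurable_sum borel_measurable_suminf
      measurable_component_singleton) auto
  moreover have "(\<lambda>\<omega>. (\<lambda>x. (\<Sum>l\<in>{Suc x0..k}. x l) + (\<Sum>l. x (Suc k + l))) (restrict (\<lambda>i. \<tau> i \<omega>) {Suc x0..}))
      = (\<lambda>\<omega>. S k \<omega> + R k \<omega>)"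
    using k by (auto simp: R_def S_def fun_eq_iff)
  ultimately show ?thesis
    by simp
qed

lemma indep_var_tau_sum:
  assumes "x0 \<le> i" "finite J" "J \<subseteq> {Suc i..}"
  shows "indep_var borel (\<tau> i) borel (\<lambda>\<omega>. \<Sum>l\<in>J. \<tau> l \<omega>)"
  using assms by (intro indep_vars_sum indep_vars_subset[OF indep_tau]) auto

lemma indep_var_tau_S: "indep_var borel (\<tau> x0) borel (S k)"
  using indep_var_tau_sum[of x0 "{Suc x0..k}"] by (simp add: S_def[abs_def])

lemma density_partial_sum_AE:
  assumes k: "x0 \<le> k" and G: "distributed M lborel (\<lambda>\<omega>. \<Sum>l=x0..k. \<tau> l \<omega>) G"
  shows "AE t in lborel. G t = ennreal (F x0 * exp (- F x0 * t)) * Phi k t"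
proof -
  have "(\<lambda>\<omega>. \<Sum>l=x0..k. \<tau> l \<omega>) = (\<lambda>\<omega>. \<tau> x0 \<omega> + S k \<omega>)"
    using k by (auto simp: S_def sum.atLeast_Suc_atMost)
  with G have "distributed M lborel (\<lambda>\<omega>. \<tau> x0 \<omega> + S k \<omega>) G"
    by simp
  moreover have "distributed M lborel (\<lambda>\<omega>. \<tau> x0 \<omega> + S k \<omega>) (\<lambda>t. ennreal (F x0 * exp (- F x0 * t)) * Phi k t)"
    by (intro distributed_exponential_add indep_var_tau_S distributed_tau first_rate_pos) simp
  ultimately show ?thesis
    by (rule distributed_unique)
qed

lemma density_sum_AE:
  assumes k: "x0 \<le> k" and g: "distributed M lborel (\<lambda>\<omega>. \<Sum>l. \<tau> (x0 + l) \<omega>) g"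
  shows "AE t in lborel. g t = ennreal (F x0 * exp (- F x0 * t)) * tilted_cdf M (F x0) (\<lambda>\<omega>. S k \<omega> + R k \<omega>) t"
proof -
  have "distr M lborel (\<lambda>\<omega>. \<Sum>l. \<tau> (x0 + l) \<omega>) = distr M lborel (\<lambda>\<omega>. \<tau> x0 \<omega> + (S k \<omega> + R k \<omega>))"
    using k by (intro distr_cong_AE AE_suminf_tau_eq) (auto simp: measurable_lborel1)
  with g have "distributed M lborel (\<lambda>\<omega>. \<tau> x0 \<omega> + (S k \<omega> + R k \<omega>)) g"
    using k by (auto simp: distributed_def measurable_lborel1)
  moreover have "distributed M lborel (\<lambda>\<omega>. \<tau> x0 \<omega> + (S k \<omega> + R k \<omega>))
      (\<lambda>t. ennreal (F x0 * exp (- F x0 * t)) * tilted_cdf M (F x0) (\<lambda>\<omega>. S k \<omega> + R k \<omega>) t)"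
    using k by (intro distributed_exponential_add indep_var_tau_S_add_R distributed_tau first_rate_pos) auto
  ultimately show ?thesis
    by (rule distributed_unique)
qed

lemma nn_integral_exp_R_le:
  assumes k: "x0 \<le> k"
  shows "(\<integral>\<^sup>+\<omega>. ennreal (exp (F x0 * R k \<omega>)) \<partial>M) \<le> ennreal (exp (F x0 * inverse_gap_tail (Suc k)))"
proof -
  define P where "P m \<omega> = (\<Sum>l\<in>{Suc k..<Suc k + m}. \<tau> l \<omega>)" for m \<omega>
  have [measurable]: "random_variable borel (P m)" for m
    unfolding P_def using k by (intro borel_measurable_sum) auto
  have "AE \<omega> in M. ennreal (exp (F x0 * R k \<omega>)) = liminf (\<lambda>m. ennreal (exp (F x0 * P m \<omega>)))"
    using AE_summable_tau[OF le_SucI[OF k]]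
  proof eventually_elim
    case (elim \<omega>)
    have "P m \<omega> = (\<Sum>l<m. \<tau> (Suc k + l) \<omega>)" for m
      unfolding P_def by (subst sum.atLeastLessThan_shift_0) (simp add: lessThan_atLeast0 add.commute)
    then have "(\<lambda>m. P m \<omega>) \<longlonglongrightarrow> R k \<omega>"
      unfolding R_def using summable_LIMSEQ[OF elim] by simp
    then have "(\<lambda>m. ennreal (exp (F x0 * P m \<omega>))) \<longlonglongrightarrow> ennreal (exp (F x0 * R k \<omega>))"
      by (intro tendsto_ennrealI tendsto_intros)
    then show ?case
      by (rule lim_imp_Liminf[symmetric, rotated]) simp
  qed
  then have "(\<integral>\<^sup>+\<omega>. ennreal (exp (F x0 * R k \<omega>)) \<partial>M) = (\<integral>\<^sup>+\<omega>. liminf (\<lambda>m. ennreal (exp (F x0 * P m \<omega>))) \<partial>M)"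
    by (rule nn_integral_cong_AE)
  also have "\<dots> \<le> liminf (\<lambda>m. \<integral>\<^sup>+\<omega>. ennreal (exp (F x0 * P m \<omega>)) \<partial>M)"
    by (rule nn_integral_liminf) measurable
  also have "\<dots> \<le> limsup (\<lambda>m. \<integral>\<^sup>+\<omega>. ennreal (exp (F x0 * P m \<omega>)) \<partial>M)"
    by (rule Liminf_le_Limsup) simp
  also have "\<dots> \<le> ennreal (exp (F x0 * inverse_gap_tail (Suc k)))"
    unfolding P_def using k
    by (intro Limsup_bounded always_eventually allI nn_integral_exp_sum_tau_le) auto
  finally show ?thesis .
qed

lemma Phi_finite: "Phi k t < \<infinity>"
proof -
  have "Phi k t \<le> (\<integral>\<^sup>+\<omega>. ennreal (exp (F x0 * S k \<omega>)) \<partial>M)"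
    by (rule tilted_cdf_le_nn_integral_exp)
  also have "\<dots> \<le> ennreal (exp (F x0 * inverse_gap_tail (Suc x0)))"
    unfolding S_def by (rule nn_integral_exp_sum_tau_le) auto
  finally show ?thesis
    by (rule order.strict_trans1) simp
qed

definition lipschitz_const :: real where
  "lipschitz_const = F (Suc x0) * exp (F x0 * inverse_gap_tail (Suc x0))"

lemma lipschitz_const_pos: "0 < lipschitz_const"
  using rate_pos[of "Suc x0"] by (simp add: lipschitz_const_def)

text \<open>The first summand \<open>\<tau> (Suc x0)\<close> of \<open>S k\<close> makes \<open>Phi k\<close> Lipschitz, uniformly in \<open>k\<close>.\<close>

lemma Phi_lipschitz:
  assumes k: "Suc x0 \<le> k" and st: "s \<le> t"
  shows "Phi k t \<le> Phi k s + ennreal (lipschitz_const * (t - s))"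
proof -
  define S' where "S' \<omega> = (\<Sum>l\<in>{Suc (Suc x0)..k}. \<tau> l \<omega>)" for \<omega>
  have S_eq: "S k = (\<lambda>\<omega>. \<tau> (Suc x0) \<omega> + S' \<omega>)"
    using k by (simp add: S_def S'_def fun_eq_iff sum.atLeast_Suc_atMost)
  have "Phi k t \<le> Phi k s + ennreal (F (Suc x0) * (t - s)) * (\<integral>\<^sup>+\<omega>. ennreal (exp (F x0 * S' \<omega>)) \<partial>M)"
    unfolding S_eq S'_def using first_rate_pos first_rate_least[of "Suc x0"] st
    by (intro tilted_cdf_exponential_add_lipschitz indep_var_tau_sum distributed_tau) auto
  also have "\<dots> \<le> Phi k s + ennreal (F (Suc x0) * (t - s)) * ennreal (exp (F x0 * inverse_gap_tail (Suc x0)))"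
    unfolding S'_def by (intro add_left_mono mult_left_mono nn_integral_exp_sum_tau_le) auto
  also have "\<dots> = Phi k s + ennreal (lipschitz_const * (t - s))"
    using st rate_pos[of "Suc x0"] by (simp add: lipschitz_const_def mult_ac flip: ennreal_mult'')
  finally show ?thesis .
qed

lemma Phi_shift_ge:
  assumes k: "Suc x0 \<le> k" and \<delta>: "0 \<le> \<delta>" and p: "0 < p" "ennreal p \<le> Phi k t"
  shows "ennreal (1 - lipschitz_const * \<delta> / p) * Phi k t \<le> Phi k (t - \<delta>)"
proof -
  let ?L = lipschitz_const
  obtain x where x: "Phi k t = ennreal x" "0 \<le> x"
    using Phi_finite[of k t] by (cases "Phi k t" rule: ennreal_cases) auto
  obtain y where y: "Phi k (t - \<delta>) = ennreal y" "0 \<le> y"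
    using Phi_finite[of k "t - \<delta>"] by (cases "Phi k (t - \<delta>)" rule: ennreal_cases) auto
  have L: "0 \<le> ?L * \<delta>"
    using lipschitz_const_pos \<delta> by simp
  have "ennreal x \<le> ennreal (y + ?L * \<delta>)"
    using Phi_lipschitz[OF k, of "t - \<delta>" t] \<delta> L x y by simp
  then have "x \<le> y + ?L * \<delta>"
    by (rule ennreal_le_iff[THEN iffD1, rotated]) (use y L in simp)
  moreover have "?L * \<delta> * 1 \<le> ?L * \<delta> * (x / p)"
    using p x L by (intro mult_left_mono) (auto simp: ennreal_le_iff)
  ultimately have "(1 - ?L * \<delta> / p) * x \<le> y"
    by (simp add: algebra_simps)
  then show ?thesis
    unfolding x y using x(2) by (simp add: ennreal_leI flip: ennreal_mult'')
qed

lemma prob_R_le_ge: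
  assumes k: "x0 \<le> k" and \<delta>: "0 < \<delta>"
  shows "1 - inverse_rate_tail (Suc k) / \<delta> \<le> prob {\<omega> \<in> space M. R k \<omega> \<le> \<delta>}"
proof -
  have [measurable]: "random_variable borel (R k)"
    using k by measurable
  have tail_nonneg: "0 \<le> inverse_rate_tail (Suc k)"
    unfolding inverse_rate_tail_def using summable_inverse_rate_from[of "Suc k"] rate_pos k
    by (intro suminf_nonneg) (auto simp: less_imp_le)
  have "emeasure M {\<omega> \<in> space M. \<delta> < R k \<omega>} \<le> emeasure M {\<omega> \<in> space M. 1 \<le> ennreal (1 / \<delta>) * ennreal (R k \<omega>)}"
  proof (intro emeasure_mono subsetI)
    fix \<omega> assume "\<omega> \<in> {\<omega> \<in> space M. \<delta> < R k \<omega>}"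
    then have "\<omega> \<in> space M" "1 \<le> 1 / \<delta> * R k \<omega>"
      using \<delta> by (auto simp: field_simps)
    then show "\<omega> \<in> {\<omega> \<in> space M. 1 \<le> ennreal (1 / \<delta>) * ennreal (R k \<omega>)}"
      using \<delta> by (simp add: ennreal_leI flip: ennreal_mult)
  qed measurable
  also have "\<dots> \<le> ennreal (1 / \<delta>) * (\<integral>\<^sup>+\<omega>. ennreal (R k \<omega>) * indicator (space M) \<omega> \<partial>M)"
    using nn_integral_Markov_inequality[of "\<lambda>\<omega>. ennreal (R k \<omega>)" "space M" M "ennreal (1 / \<delta>)"] by simp
  also have "(\<integral>\<^sup>+\<omega>. ennreal (R k \<omega>) * indicator (space M) \<omega> \<partial>M) = (\<integral>\<^sup>+\<omega>. ennreal (\<Sum>l. \<tau> (Suc k + l) \<omega>) \<partial>M)"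
    by (intro nn_integral_cong) (simp add: R_def)
  also have "\<dots> = ennreal (inverse_rate_tail (Suc k))"
    using k by (intro nn_integral_tau_tail) simp
  also have "ennreal (1 / \<delta>) * ennreal (inverse_rate_tail (Suc k)) = ennreal (inverse_rate_tail (Suc k) / \<delta>)"
    using \<delta> tail_nonneg by (simp flip: ennreal_mult)
  finally have "prob {\<omega> \<in> space M. \<delta> < R k \<omega>} \<le> inverse_rate_tail (Suc k) / \<delta>"
    using \<delta> tail_nonneg by (simp add: emeasure_eq_measure)
  moreover have "{\<omega> \<in> space M. R k \<omega> \<le> \<delta>} = space M - {\<omega> \<in> space M. \<delta> < R k \<omega>}"
    by auto
  then have "prob {\<omega> \<in> space M. R k \<omega> \<le> \<delta>} = 1 - prob {\<omega> \<in> space M. \<delta> < R k \<omega>}"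
    by (simp add: prob_compl)
  ultimately show ?thesis
    by simp
qed

lemma prob_S_le_pos:
  assumes b: "0 < b"
  shows "0 < prob {\<omega> \<in> space M. S m \<omega> \<le> b}"
proof -
  let ?J = "{Suc x0..m}"
  define e where "e = b / (real (card ?J) + 1)"
  have e: "0 < e" "real (card ?J) * e \<le> b"
    using b by (auto simp: e_def field_simps)
  have "(\<Prod>l\<in>?J. ennreal (prob {\<omega> \<in> space M. \<tau> l \<omega> \<le> e})) = (\<integral>\<^sup>+\<omega>. (\<Prod>l\<in>?J. indicator {..e} (\<tau> l \<omega>)) \<partial>M)"
    by (subst nn_integral_prod_tau) (auto intro!: prod.cong simp: nn_integral_indicator_atMost)
  also have "\<dots> \<le> (\<integral>\<^sup>+\<omega>. indicator {..b} (S m \<omega>) \<partial>M)"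
  proof (intro nn_integral_mono)
    fix \<omega>
    show "(\<Prod>l\<in>?J. indicator {..e} (\<tau> l \<omega>) :: ennreal) \<le> indicator {..b} (S m \<omega>)"
    proof (cases "\<forall>l\<in>?J. \<tau> l \<omega> \<le> e")
      case True
      then have "S m \<omega> \<le> real (card ?J) * e"
        unfolding S_def by (intro sum_bounded_above) auto
      then show ?thesis
        using True e by (simp add: indicator_def)
    next
      case False
      then obtain l where "l \<in> ?J" "\<not> \<tau> l \<omega> \<le> e"
        by auto
      then have "(\<Prod>l\<in>?J. indicator {..e} (\<tau> l \<omega>) :: ennreal) = 0"
        by (intro prod_zero bexI[of _ l]) auto
      then show ?thesis
        by (simp only: zero_le)
    qed
  qed
  also have "\<dots> = ennreal (prob {\<omega> \<in> space M. S m \<omega> \<le> b})"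
    by (rule nn_integral_indicator_atMost) measurable
  finally have le: "(\<Prod>l\<in>?J. ennreal (prob {\<omega> \<in> space M. \<tau> l \<omega> \<le> e})) \<le> ennreal (prob {\<omega> \<in> space M. S m \<omega> \<le> b})" .
  have "prob {\<omega> \<in> space M. \<tau> l \<omega> \<le> e} = 1 - exp (- e * F l)" if "l \<in> ?J" for l
    using that e by (intro exponential_distributedD_le distributed_tau rate_pos) auto
  then have "0 < (\<Prod>l\<in>?J. prob {\<omega> \<in> space M. \<tau> l \<omega> \<le> e})"
    using e rate_pos by (intro prod_pos) (simp add: mult_pos_pos)
  moreover have "(\<Prod>l\<in>?J. ennreal (prob {\<omega> \<in> space M. \<tau> l \<omega> \<le> e})) = ennreal (\<Prod>l\<in>?J. prob {\<omega> \<in> space M. \<tau> l \<omega> \<le> e})"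
    by (rule prod_ennreal) simp
  ultimately have "0 < (\<Prod>l\<in>?J. ennreal (prob {\<omega> \<in> space M. \<tau> l \<omega> \<le> e}))"
    by simp
  then have "0 < ennreal (prob {\<omega> \<in> space M. S m \<omega> \<le> b})"
    using le by (rule order.strict_trans2)
  then show ?thesis
    by simp
qed

text \<open>For \<open>k \<ge> m\<close>, \<open>S k \<le> S m + R m\<close> with \<open>S m\<close> and \<open>R m\<close> independent, and
  \<open>R m \<le> a/2\<close> with probability at least \<open>1/2\<close> once \<open>m\<close> is large.\<close>

lemma Phi_eventually_ge:
  assumes a: "0 < a"
  obtains p where "0 < p" "\<forall>\<^sub>F k in sequentially. ennreal p \<le> Phi k a"
proof -
  have "\<forall>\<^sub>F m in sequentially. x0 \<le> m \<and> inverse_rate_tail (Suc m) < a / 4"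
    using eventually_ge_at_top order_tendstoD(2)[OF LIMSEQ_Suc[OF inverse_rate_tail_tendsto_zero], of "a / 4"] a
    by (auto intro: eventually_conj)
  then obtain m where m: "x0 \<le> m" "inverse_rate_tail (Suc m) < a / 4"
    by (auto simp: eventually_sequentially)
  define p1 where "p1 = prob {\<omega> \<in> space M. S m \<omega> \<le> a / 2}"
  define p2 where "p2 = prob {\<omega> \<in> space M. R m \<omega> \<le> a / 2}"
  have p1: "0 < p1"
    unfolding p1_def using a by (intro prob_S_le_pos) simp
  have "1 - inverse_rate_tail (Suc m) / (a / 2) \<le> p2"
    unfolding p2_def using m(1) a by (intro prob_R_le_ge) auto
  moreover have "inverse_rate_tail (Suc m) / (a / 2) \<le> 1 / 2"
    using m(2) a by (simp add: field_simps)
  ultimately have p2: "1 / 2 \<le> p2"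
    by simp
  have "ennreal (p1 / 2) \<le> Phi k a" if k: "m \<le> k" for k
  proof -
    have [measurable]: "random_variable borel (R m)"
      using m(1) by measurable
    have "ennreal (p1 / 2) \<le> ennreal p1 * ennreal p2"
      using p1 p2 by (simp add: ennreal_leI flip: ennreal_mult)
    also have "\<dots> = (\<integral>\<^sup>+\<omega>. indicator {..a / 2} (S m \<omega>) * indicator {..a / 2} (R m \<omega>) \<partial>M)"
      unfolding p1_def p2_def
      by (simp add: nn_integral_indep_var_mult[OF indep_var_S_R[OF m(1)]] nn_integral_indicator_atMost)
    also have "\<dots> \<le> Phi k a"
      unfolding tilted_cdf_def using AE_S_le_S_add_R[OF m(1) k] AE_S_nonneg[of k]
    proof (intro nn_integral_mono_AE, eventually_elim)
      case (elim \<omega>)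
      have "1 \<le> exp (F x0 * S k \<omega>)"
        using elim first_rate_pos by simp
      then show ?case
        using elim by (auto split: split_indicator)
    qed
    finally show ?thesis .
  qed
  then show ?thesis
    using p1 by (intro that[of "p1 / 2"]) (auto simp: eventually_sequentially)
qed

lemma density_partial_sum_ge:
  assumes k: "x0 \<le> k" and a: "0 \<le> a" and p: "ennreal p \<le> Phi k a"
    and G: "distributed M lborel (\<lambda>\<omega>. \<Sum>l=x0..k. \<tau> l \<omega>) (\<lambda>t. ennreal (G t))"
      "\<And>t. 0 \<le> G t" "continuous_on {0<..} G"
  shows "\<forall>t\<in>{a<..}. F x0 * exp (- F x0 * t) * p \<le> G t"
proof (rule continuous_on_le_if_AE_le)
  show "continuous_on {a<..} G"
    using a by (intro continuous_on_subset[OF G(3)]) auto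
  show "AE t in lborel. t \<in> {a<..} \<longrightarrow> F x0 * exp (- F x0 * t) * p \<le> G t"
    using density_partial_sum_AE[OF k G(1)]
  proof eventually_elim
    case (elim t)
    have "ennreal (F x0 * exp (- F x0 * t) * p) \<le> ennreal (G t)" if "a < t"
      unfolding elim using first_rate_pos mult_left_mono[OF order.trans[OF p tilted_cdf_mono]] that
      by (simp add: ennreal_mult')
    then show ?case
      using G(2)[of t] by simp
  qed
next
  show "continuous_on {a<..} (\<lambda>t. F x0 * exp (- F x0 * t) * p)"
    by (intro continuous_intros)
qed simp

lemma density_sum_le:
  assumes k: "x0 \<le> k"
    and G: "distributed M lborel (\<lambda>\<omega>. \<Sum>l=x0..k. \<tau> l \<omega>) (\<lambda>t. ennreal (G t))"
      "\<And>t. 0 \<le> G t" "continuous_on {0<..} G"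
    and g: "distributed M lborel (\<lambda>\<omega>. \<Sum>l. \<tau> (x0 + l) \<omega>) (\<lambda>t. ennreal (g t))" "continuous_on {0<..} g"
  shows "\<forall>t\<in>{0<..}. g t \<le> exp (F x0 * inverse_gap_tail (Suc k)) * G t"
proof (rule continuous_on_le_if_AE_le)
  let ?B = "exp (F x0 * inverse_gap_tail (Suc k))"
  have tilted_le: "tilted_cdf M (F x0) (\<lambda>\<omega>. S k \<omega> + R k \<omega>) t \<le> Phi k t * ennreal ?B" for t
    using order.trans[OF tilted_cdf_add_le[OF indep_var_S_R[OF k] AE_R_nonneg[OF k]]
        mult_left_mono[OF nn_integral_exp_R_le[OF k]]]
    by simp
  show "AE t in lborel. t \<in> {0<..} \<longrightarrow> g t \<le> ?B * G t"
    using density_sum_AE[OF k g(1)] density_partial_sum_AE[OF k G(1)]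
  proof eventually_elim
    case (elim t)
    have "ennreal (g t) \<le> ennreal (F x0 * exp (- F x0 * t)) * Phi k t * ennreal ?B"
      unfolding elim(1) mult.assoc by (intro mult_left_mono tilted_le) simp
    also have "\<dots> = ennreal (?B * G t)"
      using G(2)[of t] by (simp add: elim(2) mult.commute ennreal_mult'')
    finally show ?case
      using G(2)[of t] by (simp add: ennreal_le_iff)
  qed
next
  show "continuous_on {0<..} (\<lambda>t. exp (F x0 * inverse_gap_tail (Suc k)) * G t)"
    using G(3) by (intro continuous_intros)
qed (use g in simp_all)

lemma density_sum_ge:
  assumes k: "x0 \<le> k" and \<delta>: "0 \<le> \<delta>" and a: "0 \<le> a"
    and shift: "\<And>t. a < t \<Longrightarrow> ennreal \<eta> * Phi k t \<le> Phi k (t - \<delta>)"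
    and G: "distributed M lborel (\<lambda>\<omega>. \<Sum>l=x0..k. \<tau> l \<omega>) (\<lambda>t. ennreal (G t))"
      "\<And>t. 0 \<le> G t" "continuous_on {0<..} G"
    and g: "distributed M lborel (\<lambda>\<omega>. \<Sum>l. \<tau> (x0 + l) \<omega>) (\<lambda>t. ennreal (g t))"
      "\<And>t. 0 \<le> g t" "continuous_on {0<..} g"
  shows "\<forall>t\<in>{a<..}. \<eta> * prob {\<omega> \<in> space M. R k \<omega> \<le> \<delta>} * G t \<le> g t"
proof (rule continuous_on_le_if_AE_le)
  let ?P = "prob {\<omega> \<in> space M. R k \<omega> \<le> \<delta>}"
  show "AE t in lborel. t \<in> {a<..} \<longrightarrow> \<eta> * ?P * G t \<le> g t"
    using density_sum_AE[OF k g(1)] density_partial_sum_AE[OF k G(1)]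
  proof eventually_elim
    case (elim t)
    have "ennreal (\<eta> * ?P * G t) \<le> ennreal (g t)" if "a < t"
    proof -
      have "ennreal (\<eta> * ?P * G t) = ennreal ?P * (ennreal (F x0 * exp (- F x0 * t)) * (ennreal \<eta> * Phi k t))"
        using G(2)[of t] by (simp add: elim(2) ennreal_mult'' mult_ac)
      also have "\<dots> \<le> ennreal ?P * (ennreal (F x0 * exp (- F x0 * t)) * Phi k (t - \<delta>))"
        using shift[OF that] by (intro mult_left_mono) auto
      also have "\<dots> = ennreal (F x0 * exp (- F x0 * t)) * (Phi k (t - \<delta>) * ennreal ?P)"
        by (simp add: mult_ac)
      also have "\<dots> \<le> ennreal (F x0 * exp (- F x0 * t)) * tilted_cdf M (F x0) (\<lambda>\<omega>. S k \<omega> + R k \<omega>) t"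
        using first_rate_pos
        by (intro mult_left_mono tilted_cdf_add_ge indep_var_S_R AE_R_nonneg k) auto
      finally show ?thesis
        by (simp add: elim(1))
    qed
    then show ?case
      using g(2)[of t] by (simp add: ennreal_le_iff)
  qed
next
  show "continuous_on {a<..} (\<lambda>t. \<eta> * prob {\<omega> \<in> space M. R k \<omega> \<le> \<delta>} * G t)"
    using a by (intro continuous_intros continuous_on_subset[OF G(3)]) auto
  show "continuous_on {a<..} g"
    using a by (intro continuous_on_subset[OF g(3)]) auto
qed simp

lemma density_ratio_bounds:
  assumes k: "Suc x0 \<le> k" and e: "0 < e" "e < 1" and a: "0 < a"
    and p: "0 < p" "ennreal p \<le> Phi k a"
    and \<delta>: "0 < \<delta>" "lipschitz_const * \<delta> / p = e / 2"
    and P: "1 - e / 2 \<le> prob {\<omega> \<in> space M. R k \<omega> \<le> \<delta>}"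
    and B: "exp (F x0 * inverse_gap_tail (Suc k)) < 1 + e"
    and G: "distributed M lborel (\<lambda>\<omega>. \<Sum>l=x0..k. \<tau> l \<omega>) (\<lambda>t. ennreal (G t))"
      "\<And>t. 0 \<le> G t" "continuous_on {0<..} G"
    and g: "distributed M lborel (\<lambda>\<omega>. \<Sum>l. \<tau> (x0 + l) \<omega>) (\<lambda>t. ennreal (g t))"
      "\<And>t. 0 \<le> g t" "continuous_on {0<..} g"
  shows "\<forall>t\<in>{a<..}. 0 < G t \<and> (1 - e) * G t \<le> g t \<and> g t \<le> (1 + e) * G t"
proof
  have k0: "x0 \<le> k"
    using k by simp
  have shift: "ennreal (1 - e / 2) * Phi k t \<le> Phi k (t - \<delta>)" if "a < t" for t
    using Phi_shift_ge[OF k less_imp_le[OF \<delta>(1)] p(1) order.trans[OF p(2) tilted_cdf_mono[of a t]]] that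
    unfolding \<delta>(2) by simp
  have "0 \<le> (e / 2) * (e / 2)"
    by simp
  then have "1 - e \<le> (1 - e / 2) * (1 - e / 2)"
    by (simp add: algebra_simps)
  also have "\<dots> \<le> (1 - e / 2) * prob {\<omega> \<in> space M. R k \<omega> \<le> \<delta>}"
    using P e by (intro mult_left_mono) auto
  finally have factor: "1 - e \<le> (1 - e / 2) * prob {\<omega> \<in> space M. R k \<omega> \<le> \<delta>}" .
  fix t assume "t \<in> {a<..}"
  then have t: "a < t" "0 < t"
    using a by auto
  have "0 < F x0 * exp (- F x0 * t) * p"
    using first_rate_pos p(1) by simp
  also have "\<dots> \<le> G t"
    using density_partial_sum_ge[OF k0 _ p(2) G] a t by simp
  finally have positive: "0 < G t" .
  have "(1 - e) * G t \<le> (1 - e / 2) * prob {\<omega> \<in> space M. R k \<omega> \<le> \<delta>} * G t"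
    using factor G(2) by (rule mult_right_mono)
  also have "\<dots> \<le> g t"
    using density_sum_ge[OF k0 less_imp_le[OF \<delta>(1)] less_imp_le[OF a] shift G g] t by simp
  finally have lower: "(1 - e) * G t \<le> g t" .
  have "g t \<le> exp (F x0 * inverse_gap_tail (Suc k)) * G t"
    using density_sum_le[OF k0 G g(1,3)] t by simp
  also have "\<dots> \<le> (1 + e) * G t"
    using B G(2) by (intro mult_right_mono) auto
  finally show "0 < G t \<and> (1 - e) * G t \<le> g t \<and> g t \<le> (1 + e) * G t"
    using positive lower by blast
qed

theorem uniform_limit_density_ratio:
  assumes G: "\<And>k. x0 \<le> k \<Longrightarrow> distributed M lborel (\<lambda>\<omega>. \<Sum>l=x0..k. \<tau> l \<omega>) (\<lambda>t. ennreal (G k t))"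
      "\<And>k t. x0 \<le> k \<Longrightarrow> 0 \<le> G k t" "\<And>k. x0 \<le> k \<Longrightarrow> continuous_on {0<..} (G k)"
    and g: "distributed M lborel (\<lambda>\<omega>. \<Sum>l. \<tau> (x0 + l) \<omega>) (\<lambda>t. ennreal (g t))"
      "\<And>t. 0 \<le> g t" "continuous_on {0<..} g"
    and t0: "0 < t0"
  shows "uniform_limit {t0..} (\<lambda>k t. G k t / g t) (\<lambda>t. 1) sequentially"
proof (rule uniform_limit_ratio_one)
  fix e :: real assume e: "0 < e" "e < 1"
  have a: "0 < t0 / 2" "t0 / 2 < t0"
    using t0 by auto
  obtain p where p: "0 < p" "\<forall>\<^sub>F k in sequentially. ennreal p \<le> Phi k (t0 / 2)"
    using Phi_eventually_ge[OF a(1)] by blast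
  define \<delta> where "\<delta> = e * p / (2 * lipschitz_const)"
  have \<delta>: "0 < \<delta>" "lipschitz_const * \<delta> / p = e / 2"
    using e p lipschitz_const_pos by (auto simp: \<delta>_def)
  have "(\<lambda>k. inverse_rate_tail (Suc k) / \<delta>) \<longlonglongrightarrow> 0"
    by (intro tendsto_divide_zero LIMSEQ_Suc[OF inverse_rate_tail_tendsto_zero])
  then have "\<forall>\<^sub>F k in sequentially. inverse_rate_tail (Suc k) / \<delta> < e / 2"
    using e by (intro order_tendstoD(2)) auto
  moreover have "(\<lambda>k. exp (F x0 * inverse_gap_tail (Suc k))) \<longlonglongrightarrow> exp (F x0 * 0)"
    by (intro tendsto_intros LIMSEQ_Suc inverse_gap_tail_tendsto_zero)
  then have "\<forall>\<^sub>F k in sequentially. exp (F x0 * inverse_gap_tail (Suc k)) < 1 + e"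
    using e by (intro order_tendstoD(2)) auto
  ultimately show "\<forall>\<^sub>F k in sequentially. \<forall>t\<in>{t0..}. 0 < G k t \<and> (1 - e) * G k t \<le> g t \<and> g t \<le> (1 + e) * G k t"
    using p(2) eventually_ge_at_top[of "Suc x0"]
  proof eventually_elim
    case (elim k)
    then have k: "Suc x0 \<le> k" and "x0 \<le> k"
      by auto
    have "1 - e / 2 \<le> prob {\<omega> \<in> space M. R k \<omega> \<le> \<delta>}"
      using prob_R_le_ge[OF \<open>x0 \<le> k\<close> \<delta>(1)] elim by simp
    with density_ratio_bounds[OF k e a(1) p(1) _ \<delta>] elim G(1-3)[OF \<open>x0 \<le> k\<close>] g a(2)
    show ?case
      by auto
  qed
qed

end

theorem lemma3:
  fixes M :: "'a measure"
    and F :: "nat \<Rightarrow> real"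
    and x0 :: nat
    and \<tau> :: "nat \<Rightarrow> 'a \<Rightarrow> real"
    and gk :: "nat \<Rightarrow> real \<Rightarrow> real"
    and g :: "real \<Rightarrow> real"
    and t0 :: real
  assumes P: "prob_space M"
    and Fpos: "\<forall>k\<ge>1. F k > 0"
    and Fmono: "strict_mono_on {1..} F \<or> strict_antimono_on {1..} F"
    and Fsum: "summable (\<lambda>k. 1 / F (k + 1))"
    and x0: "x0 \<ge> 1"
    and indep: "prob_space.indep_vars M (\<lambda>_. borel) \<tau> {x0..}"
    and expo: "\<forall>k\<ge>x0. distributed M lborel (\<tau> k) (\<lambda>x. ennreal (exponential_density (F k) x))"
    and gk_dens: "\<forall>k\<ge>x0. distributed M lborel (\<lambda>\<omega>. \<Sum>l=x0..k. \<tau> l \<omega>) (\<lambda>t. ennreal (gk k t))"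
    and gk_nonneg: "\<forall>k\<ge>x0. \<forall>t. 0 \<le> gk k t"
    and gk_cont: "\<forall>k\<ge>x0. continuous_on {0<..} (gk k)"
    and g_dens: "distributed M lborel (\<lambda>\<omega>. \<Sum>l. \<tau> (x0 + l) \<omega>) (\<lambda>t. ennreal (g t))"
    and g_nonneg: "\<forall>t. 0 \<le> g t"
    and g_cont: "continuous_on {0<..} g"
    and t0: "t0 > 0"
  shows "uniform_limit {t0..} (\<lambda>k t. gk k t / g t) (\<lambda>t. 1) sequentially"
proof -
  interpret prob_space M
    by (rule P)
  have "\<not> strict_antimono_on {1..} F"
  proof
    assume anti: "strict_antimono_on {1..} F"
    have "F (k + 1) \<le> F 1" for k
      using monotone_onD[OF anti, of 1 "k + 1"] by (cases k) auto
    then show False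
      using not_summable_inverse_bounded[of "\<lambda>k. F (k + 1)" "F 1"] Fpos Fsum by simp
  qed
  with Fmono have mono: "strict_mono_on {1..} F"
    by blast
  have "(\<lambda>l. 1 / F (x0 + l)) = (\<lambda>n. 1 / F (n + (x0 - 1) + 1))"
    using x0 by (simp add: fun_eq_iff add.commute)
  then have "summable (\<lambda>l. 1 / F (x0 + l))"
    using summable_ignore_initial_segment[OF Fsum, of "x0 - 1"] by simp
  moreover have "F x0 < F l" if "x0 < l" for l
    using monotone_onD[OF mono, of x0 l] x0 that by simp
  ultimately interpret explosive_birth_times M F x0 \<tau>
    using Fpos x0 indep expo by unfold_locales auto
  show ?thesis
    by (rule uniform_limit_density_ratio) (use gk_dens gk_nonneg gk_cont g_dens g_nonneg g_cont t0 in auto)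
qed

end
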